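(* If $G$ is a connected graph of order $n$ with minimum degree $\delta(G)\ge (n-2)/3$, then $G$ is detour covered.
   Context: All graphs are finite and simple. A detour of a graph is a longest path in it. A graph is detour covered if every vertex lies in some detour. *)

theory Defs
  imports Main
begin

definition simple_graph :: "'a set \<Rightarrow> ('a \<Rightarrow> 'a \<Rightarrow> bool) \<Rightarrow> bool" where
  "simple_graph V E \<longleftrightarrow> finite V \<and> V \<noteq> {} \<and>
     (\<forall>u v. E u v \<longrightarrow> u \<in> V \<and> v \<in> V) \<and>
     (\<forall>u v. E u v \<longrightarrow> E v u) \<and> (\<forall>v. \<not> E v v)"

definition degree :: "'a set \<Rightarrow> ('a \<Rightarrow> 'a \<Rightarrow> bool) \<Rightarrow> 'a \<Rightarrow> nat" where
  "degree V E v = card {u \<in> V. E v u}"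

definition is_path :: "'a set \<Rightarrow> ('a \<Rightarrow> 'a \<Rightarrow> bool) \<Rightarrow> 'a list \<Rightarrow> bool" where
  "is_path V E p \<longleftrightarrow> p \<noteq> [] \<and> set p \<subseteq> V \<and> distinct p \<and>
     (\<forall>i. Suc i < length p \<longrightarrow> E (p ! i) (p ! Suc i))"

definition path_len :: "'a list \<Rightarrow> nat" where
  "path_len p = length p - 1"

definition connected :: "'a set \<Rightarrow> ('a \<Rightarrow> 'a \<Rightarrow> bool) \<Rightarrow> bool" where
  "connected V E \<longleftrightarrow> (\<forall>u\<in>V. \<forall>v\<in>V. \<exists>p. is_path V E p \<and> hd p = u \<and> last p = v)"

definition detour :: "'a set \<Rightarrow> ('a \<Rightarrow> 'a \<Rightarrow> bool) \<Rightarrow> 'a list \<Rightarrow> bool" where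
  "detour V E p \<longleftrightarrow> is_path V E p \<and> (\<forall>q. is_path V E q \<longrightarrow> path_len q \<le> path_len p)"

definition detour_covered :: "'a set \<Rightarrow> ('a \<Rightarrow> 'a \<Rightarrow> bool) \<Rightarrow> bool" where
  "detour_covered V E \<longleftrightarrow> (\<forall>v\<in>V. \<exists>p. detour V E p \<and> v \<in> set p)"

end

theory Submission
  imports Defs
begin

(* Let v lie on no detour, let P be a detour and put delta = n div 3, so every degree is at
   least delta and n <= 3 delta + 2.

   A longest path Q through v is shorter than P, hence not spanning. By Posa's argument
   the ends of Q have all their neighbours on Q and no crossing pair of neighbours (it would
   close a cycle on the vertices of Q, which connectivity opens into a longer path), so
   deg (hd Q) + deg (last Q) < |Q| and |P| > |Q| >= 2 delta + 1.

   Now let T be a longest path through v avoiding P. Then |T| <= n - |P| <= delta, and each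
   end of T has at least delta + 1 - |T| neighbours on P. As no path through v is as long
   as P, the positions on P of the neighbours of hd T, their successors, and the positions
   two beyond those of the neighbours of last T are pairwise distinct and lie in an
   interval of |P| - 2 |T| positions. Hence 3 (delta + 1 - |T|) <= |P| - 2 |T|, that is
   n >= |P| + |T| >= 3 delta + 3, a contradiction. *)

definition nbr_positions :: "('a \<Rightarrow> 'a \<Rightarrow> bool) \<Rightarrow> 'a list \<Rightarrow> 'a \<Rightarrow> nat set" where
  "nbr_positions E P x = {i. i < length P \<and> E x (P ! i)}"

lemma last_take_Suc: "i < length xs \<Longrightarrow> last (take (Suc i) xs) = xs ! i"
  by (simp add: take_Suc_conv_app_nth)

lemma exists_entry_index:
  assumes "p \<noteq> []" "hd p \<notin> S" "last p \<in> S"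
  shows "\<exists>k. Suc k < length p \<and> p ! k \<notin> S \<and> p ! Suc k \<in> S"
proof -
  define k where "k = (LEAST k. p ! k \<in> S)"
  have last_in: "p ! (length p - 1) \<in> S" using assms(1,3) by (simp add: last_conv_nth)
  have kS: "p ! k \<in> S" unfolding k_def using last_in by (rule LeastI)
  have k_le: "k \<le> length p - 1" unfolding k_def using last_in by (rule Least_le)
  have "k \<noteq> 0"
  proof
    assume "k = 0"
    then show False using kS assms(1,2) by (simp add: hd_conv_nth)
  qed
  then obtain j where j: "k = Suc j" using not0_implies_Suc by blast
  have "p ! j \<notin> S" using not_less_Least[of j "\<lambda>k. p ! k \<in> S"] j k_def by simp
  moreover have "Suc j < length p" using k_le j assms(1) by simp
  ultimately show ?thesis using kS j by blast
qed

lemma card_positions_bound: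
  fixes I J :: "nat set" and m L :: nat
  assumes "finite I" "finite J" "1 \<le> m"
    and I: "\<And>i. i \<in> I \<Longrightarrow> m < i \<and> Suc i + m < L"
    and J: "\<And>j. j \<in> J \<Longrightarrow> m < j \<and> Suc j + m < L"
    and no_consecutive: "\<And>i. i \<in> I \<Longrightarrow> Suc i \<notin> I"
    and gap: "\<And>i j. i \<in> I \<Longrightarrow> j \<in> J \<Longrightarrow> j < i \<Longrightarrow> Suc j + m < i"
  shows "2 * card I + card J \<le> L - 2 * m"
proof -
  have disj1: "I \<inter> Suc ` I = {}" using no_consecutive by auto
  have disj2: "(I \<union> Suc ` I) \<inter> (\<lambda>j. j + 2) ` J = {}"
  proof -
    have "j + 2 \<notin> I" "j + 1 \<notin> I" if "j \<in> J" for j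
      using gap[of "j + 2" j] gap[of "j + 1" j] that assms(3) by auto
    then show ?thesis by auto
  qed
  have "2 * card I + card J = card (I \<union> Suc ` I \<union> (\<lambda>j. j + 2) ` J)"
    using assms(1,2) disj1 disj2 by (simp add: card_Un_disjoint card_image inj_on_def)
  also have "\<dots> \<le> card {Suc m .. L - m}"
  proof (rule card_mono)
    show "I \<union> Suc ` I \<union> (\<lambda>j. j + 2) ` J \<subseteq> {Suc m .. L - m}"
      using I J by force
  qed simp
  finally show ?thesis by simp
qed

context
  fixes V :: "'a set" and E :: "'a \<Rightarrow> 'a \<Rightarrow> bool"
  assumes graph: "simple_graph V E"
begin

lemma finite_V: "finite V"
  using graph by (simp add: simple_graph_def)

lemma edge_in_V: "E u w \<Longrightarrow> u \<in> V \<and> w \<in> V"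
  using graph by (simp add: simple_graph_def)

lemma edge_sym: "E u w \<Longrightarrow> E w u"
  using graph by (simp add: simple_graph_def)

lemma no_loop: "\<not> E u u"
  using graph by (simp add: simple_graph_def)

lemma is_path_singleton: "u \<in> V \<Longrightarrow> is_path V E [u]"
  by (simp add: is_path_def)

lemma is_path_append:
  assumes "is_path V E xs" "is_path V E ys" "set xs \<inter> set ys = {}" "E (last xs) (hd ys)"
  shows "is_path V E (xs @ ys)"
  unfolding is_path_def
proof (intro conjI allI impI)
  show "xs @ ys \<noteq> []" "set (xs @ ys) \<subseteq> V" "distinct (xs @ ys)"
    using assms(1-3) by (auto simp: is_path_def)
  fix i assume i: "Suc i < length (xs @ ys)"
  have xs: "xs \<noteq> []" "\<And>i. Suc i < length xs \<Longrightarrow> E (xs ! i) (xs ! Suc i)"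
    using assms(1) by (auto simp: is_path_def)
  have ys: "ys \<noteq> []" "\<And>i. Suc i < length ys \<Longrightarrow> E (ys ! i) (ys ! Suc i)"
    using assms(2) by (auto simp: is_path_def)
  consider "Suc i < length xs" | "Suc i = length xs" | "length xs \<le> i" by linarith
  then show "E ((xs @ ys) ! i) ((xs @ ys) ! Suc i)"
  proof cases
    case 1
    then show ?thesis using xs by (simp add: nth_append)
  next
    case 2
    then have "i = length xs - 1" by simp
    then have "(xs @ ys) ! i = last xs" using xs 2 by (simp add: nth_append last_conv_nth)
    moreover have "(xs @ ys) ! Suc i = hd ys" using 2 ys by (simp add: nth_append hd_conv_nth)
    ultimately show ?thesis using assms(4) by simp
  next
    case 3
    then have "Suc i - length xs = Suc (i - length xs)" by simp
    then show ?thesis using 3 i ys by (simp add: nth_append)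
  qed
qed

lemma is_path_rev:
  assumes "is_path V E xs"
  shows "is_path V E (rev xs)"
  unfolding is_path_def
proof (intro conjI allI impI)
  show "rev xs \<noteq> []" "set (rev xs) \<subseteq> V" "distinct (rev xs)"
    using assms by (auto simp: is_path_def)
  fix i assume i: "Suc i < length (rev xs)"
  let ?k = "length xs - Suc (Suc i)"
  have "Suc ?k = length xs - Suc i" using i by simp
  moreover have "E (xs ! ?k) (xs ! Suc ?k)" using assms i by (auto simp: is_path_def)
  ultimately have "E (xs ! (length xs - Suc i)) (xs ! ?k)" using edge_sym by metis
  then show "E (rev xs ! i) (rev xs ! Suc i)" using i by (simp add: rev_nth)
qed

lemma is_path_take: "is_path V E xs \<Longrightarrow> 0 < k \<Longrightarrow> is_path V E (take k xs)"
  unfolding is_path_def by (auto dest: in_set_takeD)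

lemma is_path_drop: "is_path V E xs \<Longrightarrow> k < length xs \<Longrightarrow> is_path V E (drop k xs)"
  unfolding is_path_def by (auto dest: in_set_dropD)

lemma length_path_le_card: "is_path V E p \<Longrightarrow> length p \<le> card V"
  unfolding is_path_def using finite_V by (metis card_mono distinct_card)

lemma disjoint_paths_length_le_card:
  assumes "is_path V E P" "is_path V E T" "set T \<inter> set P = {}"
  shows "length P + length T \<le> card V"
proof -
  have "length P + length T = card (set P \<union> set T)"
    using assms by (simp add: is_path_def card_Un_disjoint distinct_card Int_commute)
  also have "\<dots> \<le> card V" using assms finite_V by (intro card_mono) (auto simp: is_path_def)
  finally show ?thesis .
qed

lemma exists_longest_path:
  assumes "is_path V E p0" "\<Phi> p0"
  shows "\<exists>p. is_path V E p \<and> \<Phi> p \<and> (\<forall>q. is_path V E q \<and> \<Phi> q \<longrightarrow> length q \<le> length p)"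
  using ex_has_greatest_nat[of "\<lambda>p. is_path V E p \<and> \<Phi> p" p0 length "Suc (card V)"]
    assms length_path_le_card by (simp add: less_Suc_eq_le)

lemma detour_iff_longest:
  "detour V E p \<longleftrightarrow> is_path V E p \<and> (\<forall>q. is_path V E q \<longrightarrow> length q \<le> length p)"
proof -
  have "path_len q \<le> path_len p \<longleftrightarrow> length q \<le> length p"
    if "is_path V E p" "is_path V E q" for p q
    using that unfolding path_len_def is_path_def by (cases p; cases q) auto
  then show ?thesis unfolding detour_def by blast
qed

lemma is_path_rotate:
  assumes C: "is_path V E C" "E (last C) (hd C)" and "s < length C"
  shows "is_path V E (drop s C @ take s C)"
proof (cases "s = 0")
  case True
  then show ?thesis using C by simp
next
  case False
  have "distinct C" using C(1) by (simp add: is_path_def)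
  show ?thesis
  proof (rule is_path_append)
    show "is_path V E (drop s C)" using C(1) \<open>s < length C\<close> by (rule is_path_drop)
    show "is_path V E (take s C)" using C(1) False by (simp add: is_path_take)
    show "set (drop s C) \<inter> set (take s C) = {}"
      using set_take_disj_set_drop_if_distinct[OF \<open>distinct C\<close>, of s s] by auto
    show "E (last (drop s C)) (hd (take s C))" using C(2) \<open>s < length C\<close> False by simp
  qed
qed

lemma crossing_closes_cycle:
  assumes Q: "is_path V E Q" and i: "Suc i < length Q"
    and "E (hd Q) (Q ! Suc i)" "E (last Q) (Q ! i)"
  shows "\<exists>C. is_path V E C \<and> set C = set Q \<and> length C = length Q \<and> E (last C) (hd C)"
proof (intro exI conjI)
  let ?C = "take (Suc i) Q @ rev (drop (Suc i) Q)"
  have "distinct Q" "Q \<noteq> []" using Q by (auto simp: is_path_def)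
  show "is_path V E ?C"
  proof (rule is_path_append)
    show "is_path V E (take (Suc i) Q)" using Q by (rule is_path_take) simp
    show "is_path V E (rev (drop (Suc i) Q))" using Q i by (intro is_path_rev is_path_drop) simp
    show "set (take (Suc i) Q) \<inter> set (rev (drop (Suc i) Q)) = {}"
      using set_take_disj_set_drop_if_distinct[OF \<open>distinct Q\<close>, of "Suc i" "Suc i"] by simp
    show "E (last (take (Suc i) Q)) (hd (rev (drop (Suc i) Q)))"
      using edge_sym[OF \<open>E (last Q) (Q ! i)\<close>] i by (simp add: last_take_Suc hd_rev)
  qed
  show "set ?C = set Q" by (metis append_take_drop_id set_append set_rev)
  show "length ?C = length Q" by simp
  have "hd ?C = hd Q" using \<open>Q \<noteq> []\<close> by (cases Q) auto
  moreover have "last ?C = Q ! Suc i" using i by (simp add: last_rev hd_drop_conv_nth)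
  ultimately show "E (last ?C) (hd ?C)" using edge_sym[OF \<open>E (hd Q) (Q ! Suc i)\<close>] by simp
qed

lemma cycle_extends_to_longer_path:
  assumes "connected V E" and C: "is_path V E C" "E (last C) (hd C)" "set C \<noteq> V"
  shows "\<exists>C'. is_path V E C' \<and> set C \<subseteq> set C' \<and> length C' = Suc (length C)"
proof -
  have "C \<noteq> []" "set C \<subseteq> V" using C(1) by (auto simp: is_path_def)
  then obtain w where w: "w \<in> V" "w \<notin> set C" using C(3) by blast
  obtain p where p: "is_path V E p" "hd p = w" "last p = hd C"
    using \<open>connected V E\<close> w(1) \<open>C \<noteq> []\<close> \<open>set C \<subseteq> V\<close> unfolding connected_def by force
  then obtain k where k: "Suc k < length p" "p ! k \<notin> set C" "p ! Suc k \<in> set C"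
    using exists_entry_index[of p "set C"] w(2) \<open>C \<noteq> []\<close> by (auto simp: is_path_def)
  let ?x = "p ! k"
  have x: "E ?x (p ! Suc k)" using p(1) k(1) by (simp add: is_path_def)
  obtain s where s: "s < length C" "C ! s = p ! Suc k" using k(3) by (metis in_set_conv_nth)
  let ?R = "drop s C @ take s C"
  have "set ?R = set C" by (metis append_take_drop_id set_append Un_commute)
  have "is_path V E ([?x] @ ?R)"
  proof (rule is_path_append)
    show "is_path V E [?x]" using edge_in_V[OF x] by (simp add: is_path_singleton)
    show "is_path V E ?R" using C(1,2) s(1) by (rule is_path_rotate)
    show "set [?x] \<inter> set ?R = {}" using \<open>set ?R = set C\<close> k(2) by simp
    show "E (last [?x]) (hd ?R)" using x s by (simp add: hd_drop_conv_nth)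
  qed
  then show ?thesis using \<open>set ?R = set C\<close> by (intro exI[of _ "?x # ?R"]) auto
qed

lemma maximal_path_endpoint_nbrs:
  assumes Q: "is_path V E Q" "set Q \<subseteq> S"
    and maximal: "\<forall>Z. is_path V E Z \<and> set Q \<subseteq> set Z \<and> set Z \<subseteq> S \<longrightarrow> length Z \<le> length Q"
    and "w \<in> S"
  shows "E (hd Q) w \<Longrightarrow> w \<in> set Q" and "E (last Q) w \<Longrightarrow> w \<in> set Q"
proof -
  have hd_nbr: "w \<in> set R"
    if R: "is_path V E R" "set R = set Q" "length R = length Q" and "E (hd R) w" for R
  proof (rule ccontr)
    assume "w \<notin> set R"
    then have "is_path V E ([w] @ R)"
      using R(1) \<open>E (hd R) w\<close> edge_in_V[of "hd R" w] edge_sym[of "hd R" w]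
      by (intro is_path_append is_path_singleton) auto
    then have "length (w # R) \<le> length Q"
      using maximal[rule_format, of "w # R"] R(2) Q(2) \<open>w \<in> S\<close> by auto
    then show False using R(3) by simp
  qed
  show "E (hd Q) w \<Longrightarrow> w \<in> set Q" using hd_nbr[of Q] Q(1) by simp
  show "E (last Q) w \<Longrightarrow> w \<in> set Q"
    using hd_nbr[of "rev Q"] Q(1) is_path_rev by (simp add: hd_rev)
qed

lemma finite_nbr_positions [simp]: "finite (nbr_positions E P x)"
  by (simp add: nbr_positions_def)

lemma degree_le_nbr_positions:
  "degree V E x \<le> card {w \<in> V. E x w \<and> w \<notin> set P} + card (nbr_positions E P x)"
proof -
  have "{w \<in> V. E x w} \<subseteq> {w \<in> V. E x w \<and> w \<notin> set P} \<union> (!) P ` nbr_positions E P x"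
    by (auto simp: nbr_positions_def in_set_conv_nth)
  then have "degree V E x \<le> card ({w \<in> V. E x w \<and> w \<notin> set P} \<union> (!) P ` nbr_positions E P x)"
    unfolding degree_def using finite_V by (intro card_mono) (auto simp: nbr_positions_def)
  also have "\<dots> \<le> card {w \<in> V. E x w \<and> w \<notin> set P} + card ((!) P ` nbr_positions E P x)"
    by (rule card_Un_le)
  also have "\<dots> \<le> card {w \<in> V. E x w \<and> w \<notin> set P} + card (nbr_positions E P x)"
    by (simp add: card_image_le nbr_positions_def)
  finally show ?thesis .
qed

lemma maximal_path_no_crossing:
  assumes "connected V E" and Q: "is_path V E Q" "set Q \<noteq> V"
    and maximal: "\<forall>Z. is_path V E Z \<and> set Q \<subseteq> set Z \<longrightarrow> length Z \<le> length Q"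
    and i: "Suc i < length Q" "E (hd Q) (Q ! Suc i)"
  shows "\<not> E (last Q) (Q ! i)"
proof
  assume "E (last Q) (Q ! i)"
  then obtain C where "is_path V E C" "set C = set Q" "length C = length Q" "E (last C) (hd C)"
    using crossing_closes_cycle[OF Q(1) i] by blast
  then obtain C' where "is_path V E C'" "set Q \<subseteq> set C'" "length C' = Suc (length Q)"
    using cycle_extends_to_longer_path[OF \<open>connected V E\<close>] Q(2) by metis
  then show False using maximal by fastforce
qed

lemma maximal_path_degree_bound:
  assumes "connected V E" and Q: "is_path V E Q" "set Q \<noteq> V"
    and maximal: "\<forall>Z. is_path V E Z \<and> set Q \<subseteq> set Z \<longrightarrow> length Z \<le> length Q"
  shows "degree V E (hd Q) + degree V E (last Q) < length Q"
proof -
  let ?A = "nbr_positions E Q (hd Q)" and ?B = "nbr_positions E Q (last Q)"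
  have "Q \<noteq> []" "set Q \<subseteq> V" using Q(1) by (auto simp: is_path_def)
  have "\<forall>Z. is_path V E Z \<and> set Q \<subseteq> set Z \<and> set Z \<subseteq> V \<longrightarrow> length Z \<le> length Q"
    using maximal by blast
  then have closed: "{w \<in> V. E (hd Q) w \<and> w \<notin> set Q} = {}"
    "{w \<in> V. E (last Q) w \<and> w \<notin> set Q} = {}"
    using maximal_path_endpoint_nbrs[OF Q(1) \<open>set Q \<subseteq> V\<close>] by blast+
  then have deg_le: "degree V E (hd Q) \<le> card ?A" "degree V E (last Q) \<le> card ?B"
    using degree_le_nbr_positions[of "hd Q" Q] degree_le_nbr_positions[of "last Q" Q]
    by (simp_all only: closed card.empty add_0)
  have A_sub: "?A \<subseteq> {1..<length Q}"
  proof
    fix i assume "i \<in> ?A"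
    moreover have "i \<noteq> 0"
    proof
      assume "i = 0"
      then show False
        using \<open>i \<in> ?A\<close> no_loop \<open>Q \<noteq> []\<close> by (simp add: nbr_positions_def hd_conv_nth)
    qed
    ultimately show "i \<in> {1..<length Q}" by (simp add: nbr_positions_def)
  qed
  have B_sub: "Suc ` ?B \<subseteq> {1..<length Q}"
  proof
    fix k assume "k \<in> Suc ` ?B"
    then obtain i where k: "k = Suc i" and "i < length Q" "E (last Q) (Q ! i)"
      by (auto simp: nbr_positions_def)
    moreover have "i \<noteq> length Q - 1"
      using \<open>E (last Q) (Q ! i)\<close> no_loop \<open>Q \<noteq> []\<close> by (metis last_conv_nth)
    ultimately show "k \<in> {1..<length Q}" by simp
  qed
  have "?A \<inter> Suc ` ?B = {}"
    using maximal_path_no_crossing[OF assms] by (auto simp: nbr_positions_def)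
  then have "card ?A + card ?B = card (?A \<union> Suc ` ?B)"
    by (simp add: card_Un_disjoint card_image)
  also have "\<dots> \<le> card {1..<length Q}" using A_sub B_sub by (intro card_mono) auto
  also have "\<dots> < length Q" using \<open>Q \<noteq> []\<close> by simp
  finally show ?thesis using deg_le by linarith
qed

lemma is_path_take_append:
  assumes "is_path V E P" "i < length P" "is_path V E T"
    "set (take (Suc i) P) \<inter> set T = {}" "E (P ! i) (hd T)"
  shows "is_path V E (take (Suc i) P @ T)"
  using assms by (intro is_path_append is_path_take) (simp_all add: last_take_Suc)

lemma is_path_append_drop:
  assumes "is_path V E P" "i < length P" "is_path V E T"
    "set T \<inter> set (drop i P) = {}" "E (last T) (P ! i)"
  shows "is_path V E (T @ drop i P)"
  using assms by (intro is_path_append is_path_drop) (simp_all add: hd_drop_conv_nth)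

lemma longest_path_no_consecutive_nbrs:
  assumes P: "is_path V E P" and longest: "\<forall>Z. is_path V E Z \<longrightarrow> length Z \<le> length P"
    and x: "x \<in> V" "x \<notin> set P" and i: "i \<in> nbr_positions E P x"
  shows "Suc i \<notin> nbr_positions E P x"
proof
  assume "Suc i \<in> nbr_positions E P x"
  then have si: "Suc i < length P" "E x (P ! Suc i)" by (auto simp: nbr_positions_def)
  have "distinct P" using P by (simp add: is_path_def)
  have "is_path V E ([x] @ drop (Suc i) P)"
    using P si x is_path_singleton by (intro is_path_append_drop) (auto dest: in_set_dropD)
  moreover have "set (take (Suc i) P) \<inter> set ([x] @ drop (Suc i) P) = {}"
    using set_take_disj_set_drop_if_distinct[OF \<open>distinct P\<close>, of "Suc i" "Suc i"] x(2)
    by (auto dest: in_set_takeD)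
  moreover have "E (P ! i) x" using i edge_sym by (simp add: nbr_positions_def)
  ultimately have "is_path V E (take (Suc i) P @ [x] @ drop (Suc i) P)"
    using P si by (intro is_path_take_append) auto
  then have "length (take (Suc i) P @ [x] @ drop (Suc i) P) \<le> length P" using longest by blast
  then show False using si by simp
qed

lemma is_path_rev_append_drop:
  assumes P: "is_path V E P" and T: "is_path V E T" "set T \<inter> set P = {}"
    and i: "i \<in> nbr_positions E P (hd T)"
  shows "is_path V E (rev T @ drop i P)"
  using assms is_path_rev[OF T(1)]
  by (intro is_path_append_drop) (auto simp: nbr_positions_def last_rev dest: in_set_dropD)

lemma nbr_positions_hd_bounds:
  assumes P: "is_path V E P" and T: "is_path V E T" "set T \<inter> set P = {}"
    and short: "\<forall>Z. is_path V E Z \<and> set T \<subseteq> set Z \<longrightarrow> length Z < length P"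
    and i: "i \<in> nbr_positions E P (hd T)"
  shows "length T < i \<and> Suc i + length T < length P"
proof
  have il: "i < length P" and "E (P ! i) (hd T)"
    using i edge_sym by (auto simp: nbr_positions_def)
  then have "is_path V E (take (Suc i) P @ T)"
    using P T by (intro is_path_take_append) (auto dest: in_set_takeD)
  then have "length (take (Suc i) P @ T) < length P" using short by auto
  then show "Suc i + length T < length P" using il by simp
  have "length (rev T @ drop i P) < length P"
    using short is_path_rev_append_drop[OF P T i] by auto
  then show "length T < i" using il by simp
qed

lemma nbr_positions_gap:
  assumes P: "is_path V E P" and T: "is_path V E T" "set T \<inter> set P = {}"
    and short: "\<forall>Z. is_path V E Z \<and> set T \<subseteq> set Z \<longrightarrow> length Z < length P"
    and i: "i \<in> nbr_positions E P (hd T)" and j: "j \<in> nbr_positions E P (last T)" and "j < i"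
  shows "Suc j + length T < i"
proof -
  have il: "i < length P" and jl: "j < length P" "E (P ! j) (last T)"
    using i j edge_sym by (auto simp: nbr_positions_def)
  have "distinct P" "T \<noteq> []" using P T(1) by (auto simp: is_path_def)
  have "set (take (Suc j) P) \<inter> set (drop i P) = {}"
    using set_take_disj_set_drop_if_distinct[OF \<open>distinct P\<close>] \<open>j < i\<close> by simp
  then have "is_path V E (take (Suc j) P @ rev T @ drop i P)"
    using P jl is_path_rev_append_drop[OF P T i] T(2) \<open>T \<noteq> []\<close>
    by (intro is_path_take_append) (auto simp: hd_rev dest: in_set_takeD)
  then have "length (take (Suc j) P @ rev T @ drop i P) < length P" using short by auto
  then show ?thesis using il jl \<open>j < i\<close> by simp
qed

lemma degree_path_end_le:
  assumes T: "is_path V E T" and x: "x \<in> set T"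
    and closed: "\<And>w. E x w \<Longrightarrow> w \<in> set T \<union> set P"
  shows "degree V E x \<le> length T - 1 + card (nbr_positions E P x)"
proof -
  have "card {w \<in> V. E x w \<and> w \<notin> set P} \<le> card (set T - {x})"
    using closed no_loop by (intro card_mono) auto
  also have "\<dots> = length T - 1"
    using T x by (simp add: is_path_def distinct_card card_Diff_singleton)
  finally show ?thesis using degree_le_nbr_positions[of x P] by linarith
qed

lemma complement_path_bound:
  assumes P: "is_path V E P" "\<forall>Z. is_path V E Z \<longrightarrow> length Z \<le> length P"
    and T: "is_path V E T" "set T \<inter> set P = {}"
    and short: "\<forall>Z. is_path V E Z \<and> set T \<subseteq> set Z \<longrightarrow> length Z < length P"
    and closed_hd: "\<And>w. E (hd T) w \<Longrightarrow> w \<in> set T \<union> set P"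
    and closed_last: "\<And>w. E (last T) w \<Longrightarrow> w \<in> set T \<union> set P"
    and deg: "\<delta> \<le> degree V E (hd T)" "\<delta> \<le> degree V E (last T)" and "length T \<le> \<delta>"
  shows "3 * \<delta> + 3 \<le> length P + length T"
proof -
  let ?m = "length T" and ?I = "nbr_positions E P (hd T)" and ?J = "nbr_positions E P (last T)"
  have "T \<noteq> []" "set T \<subseteq> V" using T(1) by (auto simp: is_path_def)
  have I_bounds: "?m < i \<and> Suc i + ?m < length P" if "i \<in> ?I" for i
    using nbr_positions_hd_bounds[OF P(1) T short that] .
  have J_bounds: "?m < j \<and> Suc j + ?m < length P" if "j \<in> ?J" for j
    using nbr_positions_hd_bounds[OF P(1) is_path_rev[OF T(1)], of j] T(2) short that
    by (simp add: hd_rev)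
  have "degree V E (hd T) \<le> ?m - 1 + card ?I" "degree V E (last T) \<le> ?m - 1 + card ?J"
    using \<open>T \<noteq> []\<close> closed_hd closed_last by (intro degree_path_end_le[OF T(1)]; simp)+
  moreover have "0 < ?m" using \<open>T \<noteq> []\<close> by simp
  ultimately have deg_I: "\<delta> + 1 \<le> ?m + card ?I" and deg_J: "\<delta> + 1 \<le> ?m + card ?J"
    using deg by linarith+
  have positions: "2 * card ?I + card ?J \<le> length P - 2 * ?m"
  proof (rule card_positions_bound[OF finite_nbr_positions finite_nbr_positions _
        I_bounds J_bounds])
    show "1 \<le> ?m" using \<open>0 < ?m\<close> by linarith
    show "Suc i \<notin> ?I" if "i \<in> ?I" for i
      using longest_path_no_consecutive_nbrs[OF P _ _ that] hd_in_set[OF \<open>T \<noteq> []\<close>]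
        \<open>set T \<subseteq> V\<close> T(2) by blast
    show "Suc j + ?m < i" if "i \<in> ?I" "j \<in> ?J" "j < i" for i j
      using nbr_positions_gap[OF P(1) T short that] .
  qed
  have "card ?I \<noteq> 0" using deg_I \<open>?m \<le> \<delta>\<close> by linarith
  then obtain i where "i \<in> ?I" by (metis card.empty ex_in_conv)
  then have "2 * ?m < length P" using I_bounds by fastforce
  then show ?thesis using deg_I deg_J positions by linarith
qed

lemma uncovered_vertex_long_path:
  assumes "connected V E" and v: "v \<in> V" and deg: "\<forall>u\<in>V. \<delta> \<le> degree V E u"
    and P: "is_path V E P"
    and short: "\<forall>Z. is_path V E Z \<and> v \<in> set Z \<longrightarrow> length Z < length P"
  shows "2 * \<delta> + 1 < length P"
proof -
  obtain Q where Q: "is_path V E Q" "v \<in> set Q"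
    and longest: "\<forall>Z. is_path V E Z \<and> v \<in> set Z \<longrightarrow> length Z \<le> length Q"
    using exists_longest_path[of "[v]" "\<lambda>Z. v \<in> set Z"] is_path_singleton[OF v] by auto
  have "length Q < length P" using short Q by blast
  have "set Q \<noteq> V"
  proof
    assume "set Q = V"
    then have "card V = length Q" using Q(1) by (metis distinct_card is_path_def)
    then show False using \<open>length Q < length P\<close> length_path_le_card[OF P] by simp
  qed
  then have "degree V E (hd Q) + degree V E (last Q) < length Q"
    using maximal_path_degree_bound[OF \<open>connected V E\<close> Q(1)] longest Q(2) by blast
  moreover have "\<delta> \<le> degree V E (hd Q)" "\<delta> \<le> degree V E (last Q)"
    using Q(1) deg hd_in_set last_in_set by (auto simp: is_path_def)
  ultimately show ?thesis using \<open>length Q < length P\<close> by linarith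
qed

lemma vertex_on_detour:
  assumes "connected V E" and v: "v \<in> V"
    and deg: "\<forall>u\<in>V. \<delta> \<le> degree V E u" and small: "card V \<le> 3 * \<delta> + 2"
  shows "\<exists>p. detour V E p \<and> v \<in> set p"
proof (rule ccontr)
  assume uncovered: "\<nexists>p. detour V E p \<and> v \<in> set p"
  obtain P where P: "is_path V E P" "\<forall>Z. is_path V E Z \<longrightarrow> length Z \<le> length P"
    using exists_longest_path[of "[v]" "\<lambda>_. True"] is_path_singleton[OF v] by auto
  have short: "\<forall>Z. is_path V E Z \<and> v \<in> set Z \<longrightarrow> length Z < length P"
    using uncovered P by (metis detour_iff_longest le_trans not_le)
  then have "v \<notin> set P" using P(1) by blast
  have "2 * \<delta> + 1 < length P" using uncovered_vertex_long_path[OF assms(1,2,3) P(1) short] .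
  obtain T where T: "is_path V E T" "v \<in> set T \<and> set T \<subseteq> V - set P"
    and longest: "\<forall>Z. is_path V E Z \<and> (v \<in> set Z \<and> set Z \<subseteq> V - set P) \<longrightarrow> length Z \<le> length T"
    using exists_longest_path[of "[v]" "\<lambda>Z. v \<in> set Z \<and> set Z \<subseteq> V - set P"]
      is_path_singleton[OF v] v \<open>v \<notin> set P\<close> by auto
  have "set T \<inter> set P = {}" using T(2) by blast
  have closed_hd: "w \<in> set T \<union> set P" if "E (hd T) w" for w
    using maximal_path_endpoint_nbrs(1)[OF T(1), of "V - set P" w] T(2) longest edge_in_V that
    by blast
  have closed_last: "w \<in> set T \<union> set P" if "E (last T) w" for w
    using maximal_path_endpoint_nbrs(2)[OF T(1), of "V - set P" w] T(2) longest edge_in_V that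
    by blast
  have "hd T \<in> V" "last T \<in> V" using T(1) by (auto simp: is_path_def)
  have "length P + length T \<le> card V"
    using disjoint_paths_length_le_card[OF P(1) T(1) \<open>set T \<inter> set P = {}\<close>] .
  moreover have "3 * \<delta> + 3 \<le> length P + length T"
  proof (rule complement_path_bound[OF P T(1) \<open>set T \<inter> set P = {}\<close> _ closed_hd closed_last])
    show "\<forall>Z. is_path V E Z \<and> set T \<subseteq> set Z \<longrightarrow> length Z < length P" using short T(2) by blast
    show "\<delta> \<le> degree V E (hd T)" "\<delta> \<le> degree V E (last T)"
      using deg \<open>hd T \<in> V\<close> \<open>last T \<in> V\<close> by auto
    show "length T \<le> \<delta>"
      using \<open>length P + length T \<le> card V\<close> \<open>2 * \<delta> + 1 < length P\<close> small by linarith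
  qed
  ultimately show False using small by linarith
qed

end

theorem theorem5:
  fixes V :: "'a set" and E :: "'a \<Rightarrow> 'a \<Rightarrow> bool" and n :: nat
  assumes "simple_graph V E"
    and "connected V E"
    and "n = card V"
    and "\<forall>v\<in>V. 3 * int (degree V E v) \<ge> int n - 2"
  shows "detour_covered V E"
proof -
  let ?\<delta> = "card V div 3"
  have "\<forall>u\<in>V. ?\<delta> \<le> degree V E u" using assms(3,4) by fastforce
  moreover have "card V \<le> 3 * ?\<delta> + 2" by simp
  ultimately show ?thesis
    unfolding detour_covered_def using vertex_on_detour[OF assms(1,2)] by blast
qed

end
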